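(* Let $r$ be a positive integer and suppose $\vartheta> 1/(1+r)$, $\vartheta<1$. Let $(Z_t)$ be the random walk of the context with $c=1$. Then $$\pi(u,1,r,\vartheta)=\varrho(\vartheta)^u\quad\text{for all } u\in\mathbb{N}_0,$$ where $\varrho(\vartheta)=\pi(1,1,r,\vartheta)$ is the unique solution in $[0,1)$ of $\varrho=(1-\vartheta)+\vartheta\varrho^{r+1}$. Moreover, for the single-agent trust model with prior parameters $\alpha,\beta\in\mathbb{N}$ and $c=1$, the quitting probability satisfies $p_{\rm quit}(\alpha,\beta,1,r,\vartheta)=\pi(u_{\rm crit},1,r,\vartheta)$ with $u_{\rm crit}=r\alpha-\beta+1$.
   Context: Random walk: for $\vartheta\in(0,1)$ and positive integers $c,r$, let $Z_0=0$ and $Z_t=Z_{t-1}+\Delta_t$ with $\Delta_t$ i.i.d., $\Delta_t=+c$ with probability $1-\vartheta$ and $\Delta_t=-r$ with probability $\vartheta$. Define $\pi(u,c,r,\vartheta):=\mathbb{P}(\exists t\ge 0: Z_t\ge u)$. Single-agent trust model: $(X_t)$ i.i.d. Bernoulli$(\vartheta)$; $\hat S_t=\sum_{s\le t}X_s\mathbf{1}_{\{A_s=1\}}$, $\hat F_t=\sum_{s\le t}(1-X_s)\mathbf{1}_{\{A_s=1\}}$, $\hat\vartheta_t=\frac{\alpha+\hat S_t}{\alpha+\beta+\hat S_t+\hat F_t}$; $A_t=1$ iff $r\hat\vartheta_n-c(1-\hat\vartheta_n)\ge0$ for all $n\le t-1$; $\tau:=\inf\{t\in\mathbb{N}\cup\{\infty\}: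 r\hat\vartheta_t-c(1-\hat\vartheta_t)<0\}$; $p_{\rm quit}(\alpha,\beta,c,r,\vartheta):=\mathbb{P}(\tau<\infty)$. (The agent places trust while $c\hat F_t-r\hat S_t\le r\alpha-c\beta$.) *)

theory Defs
  imports "HOL-Probability.Probability"
begin

text \<open>Underlying i.i.d. Bernoulli(theta) sequence: a stream of booleans under the
  product measure; component t (0-based) is the (t+1)-st variable, True meaning 1.\<close>
definition bern_space :: "real \<Rightarrow> bool stream measure" where
  "bern_space \<theta> = stream_space (measure_pmf (bernoulli_pmf \<theta>))"

definition rw_step :: "nat \<Rightarrow> nat \<Rightarrow> bool \<Rightarrow> int" where
  "rw_step c r b = (if b then - int r else int c)"

definition rw_Z :: "nat \<Rightarrow> nat \<Rightarrow> bool stream \<Rightarrow> nat \<Rightarrow> int" where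
  "rw_Z c r \<omega> t = (\<Sum>s<t. rw_step c r (\<omega> !! s))"

definition rw_hit_prob :: "int \<Rightarrow> nat \<Rightarrow> nat \<Rightarrow> real \<Rightarrow> real" where
  "rw_hit_prob u c r \<theta> =
     measure (bern_space \<theta>) {\<omega> \<in> space (bern_space \<theta>). \<exists>t. rw_Z c r \<omega> t \<ge> u}"

definition theta_hat :: "real \<Rightarrow> real \<Rightarrow> nat \<Rightarrow> nat \<Rightarrow> real" where
  "theta_hat \<alpha> \<beta> S F = (\<alpha> + real S) / (\<alpha> + \<beta> + real S + real F)"

definition trust_ok :: "real \<Rightarrow> real \<Rightarrow> nat \<Rightarrow> nat \<Rightarrow> nat \<Rightarrow> nat \<Rightarrow> bool" where
  "trust_ok \<alpha> \<beta> c r S F \<longleftrightarrow>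
     real r * theta_hat \<alpha> \<beta> S F - real c * (1 - theta_hat \<alpha> \<beta> S F) \<ge> 0"

text \<open>State at time t: (S_t, F_t, alive_t) with alive_t = (trust condition holds at all n <= t).
  Trust is placed at time t+1 (A_{t+1} = 1) iff alive_t; X_{t+1} = omega !! t.\<close>
fun trust_state :: "real \<Rightarrow> real \<Rightarrow> nat \<Rightarrow> nat \<Rightarrow> bool stream \<Rightarrow> nat \<Rightarrow> nat \<times> nat \<times> bool" where
  "trust_state \<alpha> \<beta> c r \<omega> 0 = (0, 0, trust_ok \<alpha> \<beta> c r 0 0)"
| "trust_state \<alpha> \<beta> c r \<omega> (Suc t) =
     (case trust_state \<alpha> \<beta> c r \<omega> t of (S, F, al) \<Rightarrow>
        let S' = (if al \<and> \<omega> !! t then Suc S else S);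
            F' = (if al \<and> \<not> \<omega> !! t then Suc F else F)
        in (S', F', al \<and> trust_ok \<alpha> \<beta> c r S' F'))"

definition S_hat :: "real \<Rightarrow> real \<Rightarrow> nat \<Rightarrow> nat \<Rightarrow> bool stream \<Rightarrow> nat \<Rightarrow> nat" where
  "S_hat \<alpha> \<beta> c r \<omega> t = fst (trust_state \<alpha> \<beta> c r \<omega> t)"

definition F_hat :: "real \<Rightarrow> real \<Rightarrow> nat \<Rightarrow> nat \<Rightarrow> bool stream \<Rightarrow> nat \<Rightarrow> nat" where
  "F_hat \<alpha> \<beta> c r \<omega> t = fst (snd (trust_state \<alpha> \<beta> c r \<omega> t))"

definition tau :: "real \<Rightarrow> real \<Rightarrow> nat \<Rightarrow> nat \<Rightarrow> bool stream \<Rightarrow> enat" where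
  "tau \<alpha> \<beta> c r \<omega> =
     (if \<exists>t. \<not> trust_ok \<alpha> \<beta> c r (S_hat \<alpha> \<beta> c r \<omega> t) (F_hat \<alpha> \<beta> c r \<omega> t)
      then enat (LEAST t. \<not> trust_ok \<alpha> \<beta> c r (S_hat \<alpha> \<beta> c r \<omega> t) (F_hat \<alpha> \<beta> c r \<omega> t))
      else \<infinity>)"

definition p_quit :: "real \<Rightarrow> real \<Rightarrow> nat \<Rightarrow> nat \<Rightarrow> real \<Rightarrow> real" where
  "p_quit \<alpha> \<beta> c r \<theta> =
     measure (bern_space \<theta>) {\<omega> \<in> space (bern_space \<theta>). tau \<alpha> \<beta> c r \<omega> < \<infinity>}"

end

theory Submission
  imports Defs
begin

text \<open>With upward steps of size 1 the walk cannot jump over a level, so it reaches \<open>u + v\<close>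
  only by first hitting \<open>u\<close> exactly; from that moment on its increments form a fresh copy of
  the walk (strong Markov property at the first passage time), whence
  \<open>\<pi>(u + v) = \<pi>(u) \<pi>(v)\<close> and \<open>\<pi>(u) = \<rho>\<^sup>u\<close>. Conditioning on the first step gives
  \<open>\<rho> = (1 - \<theta>) + \<theta> \<pi>(1 + r) = (1 - \<theta>) + \<theta> \<rho>\<^sup>r\<^sup>+\<^sup>1\<close>. Partial sums of the first passage
  probabilities are dominated by \<open>q\<^sup>u\<close> for every fixed point \<open>q \<ge> 0\<close>, so \<open>\<rho>\<close> is the least
  one. For \<open>x < 1\<close> the fixed point equation is equivalent to \<open>\<theta> (1 + x + \<dots> + x\<^sup>r) = 1\<close>,
  which has exactly one solution in \<open>[0, 1)\<close> when \<open>\<theta> (r + 1) > 1\<close>.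

  In the trust model, as long as the agent trusts, \<open>c F\<^sub>t - r S\<^sub>t\<close> follows the walk \<open>Z\<^sub>t\<close>
  exactly, and trust is withdrawn as soon as it exceeds \<open>r \<alpha> - c \<beta>\<close>.\<close>

lemma prob_space_bern_space: "prob_space (bern_space \<theta>)"
  unfolding bern_space_def by (intro prob_space.prob_space_stream_space prob_space_measure_pmf)

lemma space_bern_space [simp]: "space (bern_space \<theta>) = UNIV"
  unfolding bern_space_def by (simp add: space_stream_space)

lemma sets_bern_space: "sets (bern_space \<theta>) = sets (stream_space (count_space UNIV))"
  unfolding bern_space_def by (rule sets_stream_space_cong) simp

lemma UNIV_in_sets_bern_space [measurable]: "UNIV \<in> sets (bern_space \<theta>)"
  using sets.top[of "bern_space \<theta>"] by simp

lemma measure_bern_space_UNIV [simp]: "measure (bern_space \<theta>) UNIV = 1"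
  using prob_space.prob_space[OF prob_space_bern_space] by simp

lemma measurable_sdrop_bern_space [measurable]: "sdrop t \<in> bern_space \<theta> \<rightarrow>\<^sub>M bern_space \<theta>"
  unfolding bern_space_def by measurable

lemma measure_bern_space_Cons:
  assumes "0 \<le> \<theta>" "\<theta> \<le> 1" and [measurable]: "A \<in> sets (bern_space \<theta>)"
  shows "measure (bern_space \<theta>) A = \<theta> * measure (bern_space \<theta>) {\<omega>. True ## \<omega> \<in> A}
     + (1 - \<theta>) * measure (bern_space \<theta>) {\<omega>. False ## \<omega> \<in> A}"
proof -
  interpret prob_space "bern_space \<theta>" by (rule prob_space_bern_space)
  have "emeasure (bern_space \<theta>) A =
      (\<integral>\<^sup>+x. emeasure (bern_space \<theta>) {\<omega> \<in> space (bern_space \<theta>). x ## \<omega> \<in> A} \<partial>bernoulli_pmf \<theta>)"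
    using assms(3) unfolding bern_space_def
    by (rule prob_space.emeasure_stream_space[OF prob_space_measure_pmf])
  also have "\<dots> = ennreal \<theta> * emeasure (bern_space \<theta>) {\<omega>. True ## \<omega> \<in> A}
      + ennreal (1 - \<theta>) * emeasure (bern_space \<theta>) {\<omega>. False ## \<omega> \<in> A}"
    using assms(1,2) by (simp add: nn_integral_measure_pmf nn_integral_count_space_finite UNIV_bool)
  finally show ?thesis
    using assms(1,2)
    by (simp add: emeasure_eq_measure ennreal_mult'[symmetric] ennreal_plus[symmetric] del: ennreal_plus)
qed

section \<open>The random walk and first passage\<close>

lemma rw_Z_0 [simp]: "rw_Z c r \<omega> 0 = 0"
  by (simp add: rw_Z_def)

lemma rw_Z_Suc: "rw_Z c r \<omega> (Suc t) = rw_Z c r \<omega> t + rw_step c r (\<omega> !! t)"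
  by (simp add: rw_Z_def)

lemma rw_Z_Cons_Suc: "rw_Z c r (x ## \<omega>) (Suc t) = rw_step c r x + rw_Z c r \<omega> t"
  unfolding rw_Z_def by (simp only: sum.lessThan_Suc_shift) simp

lemma rw_Z_add: "rw_Z c r \<omega> (t + s) = rw_Z c r \<omega> t + rw_Z c r (sdrop t \<omega>) s"
  by (induction s) (simp_all add: rw_Z_Suc sdrop_snth)

lemma measurable_rw_Z [measurable]:
  "(\<lambda>\<omega>. rw_Z c r \<omega> t) \<in> bern_space \<theta> \<rightarrow>\<^sub>M count_space UNIV"
proof -
  have stake: "(\<lambda>\<omega>. rw_Z c r \<omega> t) = (\<lambda>\<omega>. sum_list (map (rw_step c r) (stake t \<omega>)))"
    unfolding rw_Z_def
    by (rule ext, induction t) (simp_all only: sum.lessThan_Suc_shift, auto)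
  have "(\<lambda>\<omega>. sum_list (map (rw_step c r) (stake t \<omega>)))
      \<in> stream_space (count_space UNIV) \<rightarrow>\<^sub>M count_space UNIV"
    by (rule measurable_compose[OF measurable_stake]) simp
  then show ?thesis
    unfolding stake using measurable_cong_sets[OF sets_bern_space refl] by blast
qed

lemma ex_rw_Z_ge_Cons:
  "(\<exists>t. v \<le> rw_Z c r (x ## \<omega>) t) \<longleftrightarrow> v \<le> 0 \<or> (\<exists>t. v - rw_step c r x \<le> rw_Z c r \<omega> t)"
proof
  assume "\<exists>t. v \<le> rw_Z c r (x ## \<omega>) t"
  then obtain t where t: "v \<le> rw_Z c r (x ## \<omega>) t" by blast
  show "v \<le> 0 \<or> (\<exists>t. v - rw_step c r x \<le> rw_Z c r \<omega> t)"
  proof (cases t)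
    case 0
    then show ?thesis using t by simp
  next
    case (Suc t')
    then show ?thesis using t by (auto simp: rw_Z_Cons_Suc algebra_simps)
  qed
next
  assume "v \<le> 0 \<or> (\<exists>t. v - rw_step c r x \<le> rw_Z c r \<omega> t)"
  then show "\<exists>t. v \<le> rw_Z c r (x ## \<omega>) t"
  proof
    assume "v \<le> 0"
    then show ?thesis by (intro exI[of _ 0]) simp
  next
    assume "\<exists>t. v - rw_step c r x \<le> rw_Z c r \<omega> t"
    then obtain t where "v - rw_step c r x \<le> rw_Z c r \<omega> t" by blast
    then show ?thesis by (intro exI[of _ "Suc t"]) (simp add: rw_Z_Cons_Suc algebra_simps)
  qed
qed

lemma rw_hit_prob_eq_measure:
  "rw_hit_prob v c r \<theta> = measure (bern_space \<theta>) {\<omega>. \<exists>t. v \<le> rw_Z c r \<omega> t}"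
  by (simp add: rw_hit_prob_def)

lemma sets_rw_hit_event [measurable]: "{\<omega>. \<exists>t. v \<le> rw_Z c r \<omega> t} \<in> sets (bern_space \<theta>)"
proof -
  have "{\<omega> \<in> space (bern_space \<theta>). \<exists>t. v \<le> rw_Z c r \<omega> t} \<in> sets (bern_space \<theta>)"
    by measurable
  then show ?thesis by simp
qed

lemma rw_hit_prob_nonpos: "v \<le> 0 \<Longrightarrow> rw_hit_prob v c r \<theta> = 1"
proof -
  assume "v \<le> 0"
  then have "{\<omega>. \<exists>t. v \<le> rw_Z c r \<omega> t} = UNIV" by (auto intro: exI[of _ 0])
  then show ?thesis by (simp add: rw_hit_prob_eq_measure)
qed

lemma rw_hit_prob_first_step:
  assumes "0 \<le> \<theta>" "\<theta> \<le> 1" "0 < v"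
  shows "rw_hit_prob v c r \<theta> =
    \<theta> * rw_hit_prob (v + int r) c r \<theta> + (1 - \<theta>) * rw_hit_prob (v - int c) c r \<theta>"
  using measure_bern_space_Cons[OF assms(1,2) sets_rw_hit_event, of v c r] assms(3)
  by (simp add: rw_hit_prob_eq_measure ex_rw_Z_ge_Cons rw_step_def)


definition first_passage :: "nat \<Rightarrow> nat \<Rightarrow> int \<Rightarrow> nat \<Rightarrow> bool stream \<Rightarrow> bool" where
  "first_passage c r v t \<omega> \<longleftrightarrow> v \<le> rw_Z c r \<omega> t \<and> (\<forall>s<t. rw_Z c r \<omega> s < v)"

lemma first_passage_0: "first_passage c r v 0 \<omega> \<longleftrightarrow> v \<le> 0"
  by (simp add: first_passage_def)

lemma first_passage_Cons_Suc:
  "first_passage c r v (Suc t) (x ## \<omega>) \<longleftrightarrow> 0 < v \<and> first_passage c r (v - rw_step c r x) t \<omega>"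
proof -
  have "(\<forall>s<Suc t. rw_Z c r (x ## \<omega>) s < v) \<longleftrightarrow>
      0 < v \<and> (\<forall>s<t. rw_Z c r (x ## \<omega>) (Suc s) < v)"
    by (auto simp: less_Suc_eq_0_disj)
  then show ?thesis
    unfolding first_passage_def rw_Z_Cons_Suc by (auto simp: algebra_simps)
qed

lemma first_passage_unique: "first_passage c r v t \<omega> \<Longrightarrow> first_passage c r v s \<omega> \<Longrightarrow> t = s"
  unfolding first_passage_def by (metis linorder_neqE_nat not_le)

lemma ex_first_passage_iff: "(\<exists>t. first_passage c r v t \<omega>) \<longleftrightarrow> (\<exists>t. v \<le> rw_Z c r \<omega> t)"
  unfolding first_passage_def
  using exists_least_iff[of "\<lambda>t. v \<le> rw_Z c r \<omega> t"] by (auto simp: not_le)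

lemma sets_first_passage_sdrop [measurable]:
  assumes [measurable]: "B \<in> sets (bern_space \<theta>)"
  shows "{\<omega>. first_passage c r v t \<omega> \<and> sdrop t \<omega> \<in> B} \<in> sets (bern_space \<theta>)"
proof -
  have "{\<omega> \<in> space (bern_space \<theta>). first_passage c r v t \<omega> \<and> sdrop t \<omega> \<in> B} \<in> sets (bern_space \<theta>)"
    unfolding first_passage_def by measurable
  then show ?thesis by simp
qed

definition passage_prob :: "real \<Rightarrow> nat \<Rightarrow> nat \<Rightarrow> int \<Rightarrow> bool stream set \<Rightarrow> nat \<Rightarrow> real" where
  "passage_prob \<theta> c r v B t = measure (bern_space \<theta>) {\<omega>. first_passage c r v t \<omega> \<and> sdrop t \<omega> \<in> B}"

lemma passage_prob_0: "passage_prob \<theta> c r v B 0 = (if v \<le> 0 then measure (bern_space \<theta>) B else 0)"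
  by (simp add: passage_prob_def first_passage_0)

lemma passage_prob_Suc:
  assumes "0 \<le> \<theta>" "\<theta> \<le> 1" and [measurable]: "B \<in> sets (bern_space \<theta>)"
  shows "passage_prob \<theta> c r v B (Suc t) = (if v \<le> 0 then 0 else
     \<theta> * passage_prob \<theta> c r (v + int r) B t + (1 - \<theta>) * passage_prob \<theta> c r (v - int c) B t)"
  using measure_bern_space_Cons[OF assms(1,2) sets_first_passage_sdrop[OF assms(3), of c r v "Suc t"]]
  by (simp add: passage_prob_def first_passage_Cons_Suc rw_step_def)

text \<open>Strong Markov property at the first passage time, proved by induction on \<open>t\<close>: both
  sides obey the recursion of \<open>passage_prob_Suc\<close>.\<close>
lemma passage_prob_eq_mult:
  assumes "0 \<le> \<theta>" "\<theta> \<le> 1" and B: "B \<in> sets (bern_space \<theta>)"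
  shows "passage_prob \<theta> c r v B t = passage_prob \<theta> c r v UNIV t * measure (bern_space \<theta>) B"
proof (induction t arbitrary: v)
  case 0
  then show ?case by (simp add: passage_prob_0)
next
  case (Suc t)
  then show ?case
    using passage_prob_Suc[OF assms] passage_prob_Suc[OF assms(1,2), of UNIV]
    by (simp add: algebra_simps)
qed

lemma passage_prob_sums:
  assumes [measurable]: "B \<in> sets (bern_space \<theta>)"
  shows "passage_prob \<theta> c r v B sums
    measure (bern_space \<theta>) {\<omega>. \<exists>t. first_passage c r v t \<omega> \<and> sdrop t \<omega> \<in> B}"
proof -
  interpret prob_space "bern_space \<theta>" by (rule prob_space_bern_space)
  define A where "A t = {\<omega>. first_passage c r v t \<omega> \<and> sdrop t \<omega> \<in> B}" for t
  have "range A \<subseteq> sets (bern_space \<theta>)"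
    by (auto simp: A_def)
  moreover have "disjoint_family A"
    unfolding disjoint_family_on_def A_def using first_passage_unique by blast
  ultimately have "(\<lambda>t. measure (bern_space \<theta>) (A t)) sums measure (bern_space \<theta>) (\<Union>t. A t)"
    by (rule finite_measure_UNION)
  moreover have "(\<Union>t. A t) = {\<omega>. \<exists>t. first_passage c r v t \<omega> \<and> sdrop t \<omega> \<in> B}"
    by (auto simp: A_def)
  ultimately show ?thesis by (simp add: passage_prob_def[abs_def] A_def)
qed

lemma passage_prob_sums_rw_hit_prob: "passage_prob \<theta> c r v UNIV sums rw_hit_prob v c r \<theta>"
  using passage_prob_sums[of UNIV \<theta> c r v]
  by (simp add: rw_hit_prob_eq_measure ex_first_passage_iff)


section \<open>The skip-free case \<open>c = 1\<close>\<close>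

lemma first_passage_level:
  assumes "0 \<le> v" "first_passage 1 r v t \<omega>"
  shows "rw_Z 1 r \<omega> t = v"
proof (cases t)
  case 0
  then show ?thesis using assms by (simp add: first_passage_def)
next
  case (Suc t')
  have "rw_Z 1 r \<omega> t \<le> rw_Z 1 r \<omega> t' + 1"
    by (simp add: Suc rw_Z_Suc rw_step_def)
  then show ?thesis using assms Suc by (auto simp: first_passage_def)
qed

lemma ex_rw_Z_ge_add_iff:
  assumes "0 \<le> u" "0 \<le> v"
  shows "(\<exists>m. u + v \<le> rw_Z 1 r \<omega> m) \<longleftrightarrow>
    (\<exists>t. first_passage 1 r u t \<omega> \<and> (\<exists>s. v \<le> rw_Z 1 r (sdrop t \<omega>) s))"
proof
  assume "\<exists>m. u + v \<le> rw_Z 1 r \<omega> m"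
  then obtain m where m: "u + v \<le> rw_Z 1 r \<omega> m" by blast
  then have "\<exists>m. u \<le> rw_Z 1 r \<omega> m" using assms(2) by (intro exI[of _ m]) simp
  then obtain t where t: "first_passage 1 r u t \<omega>" by (auto simp: ex_first_passage_iff[symmetric])
  have "t \<le> m"
  proof (rule ccontr)
    assume "\<not> t \<le> m"
    then have "rw_Z 1 r \<omega> m < u" using t by (auto simp: first_passage_def)
    then show False using m assms(2) by simp
  qed
  then obtain s where "m = t + s" using le_Suc_ex by blast
  then have "v \<le> rw_Z 1 r (sdrop t \<omega>) s"
    using m first_passage_level[OF assms(1) t] by (simp add: rw_Z_add)
  then show "\<exists>t. first_passage 1 r u t \<omega> \<and> (\<exists>s. v \<le> rw_Z 1 r (sdrop t \<omega>) s)"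
    using t by blast
next
  assume "\<exists>t. first_passage 1 r u t \<omega> \<and> (\<exists>s. v \<le> rw_Z 1 r (sdrop t \<omega>) s)"
  then obtain t s where t: "first_passage 1 r u t \<omega>" and s: "v \<le> rw_Z 1 r (sdrop t \<omega>) s"
    by blast
  then have "u + v \<le> rw_Z 1 r \<omega> (t + s)"
    using first_passage_level[OF assms(1) t] by (simp add: rw_Z_add)
  then show "\<exists>m. u + v \<le> rw_Z 1 r \<omega> m" by blast
qed

lemma rw_hit_prob_add:
  assumes "0 \<le> \<theta>" "\<theta> \<le> 1" "0 \<le> u" "0 \<le> v"
  shows "rw_hit_prob (u + v) 1 r \<theta> = rw_hit_prob u 1 r \<theta> * rw_hit_prob v 1 r \<theta>"
proof -
  define E where "E = {\<omega>. \<exists>s. v \<le> rw_Z 1 r \<omega> s}"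
  have E: "E \<in> sets (bern_space \<theta>)" unfolding E_def by measurable
  have "rw_hit_prob (u + v) 1 r \<theta> =
      measure (bern_space \<theta>) {\<omega>. \<exists>t. first_passage 1 r u t \<omega> \<and> sdrop t \<omega> \<in> E}"
    using ex_rw_Z_ge_add_iff[OF assms(3,4)] by (simp add: rw_hit_prob_eq_measure E_def)
  also have "\<dots> = (\<Sum>t. passage_prob \<theta> 1 r u E t)"
    using passage_prob_sums[OF E] by (simp add: sums_iff)
  also have "\<dots> = (\<Sum>t. passage_prob \<theta> 1 r u UNIV t * measure (bern_space \<theta>) E)"
    using passage_prob_eq_mult[OF assms(1,2) E] by simp
  also have "\<dots> = rw_hit_prob u 1 r \<theta> * measure (bern_space \<theta>) E"
    using sums_mult2[OF passage_prob_sums_rw_hit_prob] by (simp add: sums_iff)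
  finally show ?thesis by (simp add: rw_hit_prob_eq_measure E_def)
qed

lemma rw_hit_prob_power:
  assumes "0 \<le> \<theta>" "\<theta> \<le> 1"
  shows "rw_hit_prob (int u) 1 r \<theta> = rw_hit_prob 1 1 r \<theta> ^ u"
proof (induction u)
  case 0
  then show ?case by (simp add: rw_hit_prob_nonpos)
next
  case (Suc u)
  then show ?case
    using rw_hit_prob_add[OF assms, of 1 "int u" r] by simp
qed

text \<open>Minimality of the hitting probabilities among the nonnegative solutions.\<close>
lemma passage_prob_partial_sum_le:
  assumes "0 \<le> \<theta>" "\<theta> \<le> 1" "0 \<le> q" "q = (1 - \<theta>) + \<theta> * q ^ (r + 1)"
  shows "(\<Sum>t<n. passage_prob \<theta> 1 r v UNIV t) \<le> q ^ nat v"
proof (induction n arbitrary: v)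
  case 0
  then show ?case using assms(3) by simp
next
  case (Suc n)
  have split: "(\<Sum>t<Suc n. passage_prob \<theta> 1 r v UNIV t) =
      passage_prob \<theta> 1 r v UNIV 0 + (\<Sum>t<n. passage_prob \<theta> 1 r v UNIV (Suc t))"
    by (rule sum.lessThan_Suc_shift)
  show ?case
  proof (cases "v \<le> 0")
    case True
    then show ?thesis
      unfolding split by (simp add: passage_prob_0 passage_prob_Suc[OF assms(1,2)])
  next
    case False
    then have "(\<Sum>t<Suc n. passage_prob \<theta> 1 r v UNIV t) =
        \<theta> * (\<Sum>t<n. passage_prob \<theta> 1 r (v + int r) UNIV t)
        + (1 - \<theta>) * (\<Sum>t<n. passage_prob \<theta> 1 r (v - 1) UNIV t)"
      unfolding split
      by (simp add: passage_prob_0 passage_prob_Suc[OF assms(1,2)] sum.distrib sum_distrib_left)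
    also have "\<dots> \<le> \<theta> * q ^ nat (v + int r) + (1 - \<theta>) * q ^ nat (v - 1)"
      using Suc.IH assms(1,2) by (intro add_mono mult_left_mono) auto
    also have "\<dots> = q ^ nat (v - 1) * ((1 - \<theta>) + \<theta> * q ^ (r + 1))"
    proof -
      have "nat (v + int r) = nat (v - 1) + (r + 1)" using False by simp
      then show ?thesis by (simp add: power_add algebra_simps)
    qed
    also have "\<dots> = q ^ nat v"
    proof -
      have "nat v = Suc (nat (v - 1))" using False by simp
      then show ?thesis using assms(4) by simp
    qed
    finally show ?thesis .
  qed
qed

lemma rw_hit_prob_le_fixed_point:
  assumes "0 \<le> \<theta>" "\<theta> \<le> 1" "0 \<le> q" "q = (1 - \<theta>) + \<theta> * q ^ (r + 1)"
  shows "rw_hit_prob v 1 r \<theta> \<le> q ^ nat v"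
  using passage_prob_sums_rw_hit_prob[of \<theta> 1 r v] passage_prob_partial_sum_le[OF assms, of v]
  by (metis sums_iff suminf_le_const)

section \<open>The fixed point equation\<close>

text \<open>\<open>(1 - \<theta>) + \<theta> x\<^sup>r\<^sup>+\<^sup>1 - x = (1 - x) (1 - \<theta> (1 + x + \<dots> + x\<^sup>r))\<close>.\<close>
lemma fixed_point_iff_geometric_sum:
  fixes x \<theta> :: real
  assumes "x < 1"
  shows "x = (1 - \<theta>) + \<theta> * x ^ (r + 1) \<longleftrightarrow> \<theta> * (\<Sum>i\<le>r. x ^ i) = 1"
proof -
  have power: "x ^ (r + 1) = 1 - (1 - x) * (\<Sum>i\<le>r. x ^ i)"
    using one_diff_power_eq[of x "Suc r"] by (simp add: lessThan_Suc_atMost)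
  have "(1 - \<theta>) + \<theta> * x ^ (r + 1) = x + (1 - x) * (1 - \<theta> * (\<Sum>i\<le>r. x ^ i))"
    unfolding power by (simp add: algebra_simps)
  then show ?thesis using assms by auto
qed

lemma geometric_sum_strict_mono:
  fixes x y :: real
  assumes "0 < r" "0 \<le> x" "x < y"
  shows "(\<Sum>i\<le>r. x ^ i) < (\<Sum>i\<le>r. y ^ i)"
proof (rule sum_strict_mono_ex1)
  show "\<forall>i\<in>{..r}. x ^ i \<le> y ^ i" using assms by (auto intro: power_mono)
  show "\<exists>i\<in>{..r}. x ^ i < y ^ i" using assms by (intro bexI[of _ 1]) auto
qed simp

lemma fixed_point_exists:
  fixes \<theta> :: real
  assumes "1 / (1 + real r) < \<theta>" "\<theta> < 1"
  shows "\<exists>x. 0 \<le> x \<and> x < 1 \<and> x = (1 - \<theta>) + \<theta> * x ^ (r + 1)"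
proof -
  have big: "1 < \<theta> * (1 + real r)" using assms(1) by (simp add: field_simps)
  have "\<exists>x. 0 \<le> x \<and> x \<le> 1 \<and> \<theta> * (\<Sum>i\<le>r. x ^ i) = 1"
  proof (rule IVT')
    have "(\<Sum>i\<le>r. (0::real) ^ i) = 1" by (induction r) auto
    then show "\<theta> * (\<Sum>i\<le>r. 0 ^ i) \<le> 1" using assms(2) by simp
    show "1 \<le> \<theta> * (\<Sum>i\<le>r. 1 ^ i)" using big by simp
    show "continuous_on {0..1} (\<lambda>x. \<theta> * (\<Sum>i\<le>r. x ^ i))" by (intro continuous_intros)
  qed simp
  then obtain x where x: "0 \<le> x" "x \<le> 1" "\<theta> * (\<Sum>i\<le>r. x ^ i) = 1" by blast
  have "x \<noteq> 1" using x(3) big by auto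
  then show ?thesis using x fixed_point_iff_geometric_sum[of x] by force
qed

lemma fixed_point_unique:
  fixes x y \<theta> :: real
  assumes "0 < r" "0 < \<theta>"
    and "0 \<le> x" "x < 1" "x = (1 - \<theta>) + \<theta> * x ^ (r + 1)"
    and "0 \<le> y" "y < 1" "y = (1 - \<theta>) + \<theta> * y ^ (r + 1)"
  shows "x = y"
proof -
  have "\<theta> * (\<Sum>i\<le>r. x ^ i) = \<theta> * (\<Sum>i\<le>r. y ^ i)"
    using assms fixed_point_iff_geometric_sum by simp
  then have "(\<Sum>i\<le>r. x ^ i) = (\<Sum>i\<le>r. y ^ i)"
    using assms(2) by simp
  then show ?thesis
    using geometric_sum_strict_mono[OF assms(1)] assms(3,6) by (metis linorder_neqE less_irrefl)
qed


section \<open>The trust model\<close>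

lemma trust_ok_iff:
  assumes "0 < \<alpha>" "0 \<le> \<beta>"
  shows "trust_ok \<alpha> \<beta> c r S F \<longleftrightarrow>
    real c * real F - real r * real S \<le> real r * \<alpha> - real c * \<beta>"
proof -
  define N where "N = \<alpha> + real S"
  define D where "D = \<alpha> + \<beta> + real S + real F"
  have D: "0 < D" using assms by (simp add: D_def)
  have theta_hat: "theta_hat \<alpha> \<beta> S F = N / D"
    by (simp add: theta_hat_def N_def D_def)
  have "real r * theta_hat \<alpha> \<beta> S F - real c * (1 - theta_hat \<alpha> \<beta> S F) =
      (real r * N - real c * (D - N)) / D"
    unfolding theta_hat using D by (simp add: field_simps)
  then have "trust_ok \<alpha> \<beta> c r S F \<longleftrightarrow> 0 \<le> real r * N - real c * (D - N)"
    using D by (simp add: trust_ok_def zero_le_divide_iff)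
  then show ?thesis by (simp add: N_def D_def algebra_simps)
qed

lemma trust_ok_iff_int:
  assumes "0 < a"
  shows "trust_ok (real a) (real b) c r S F \<longleftrightarrow>
    int c * int F - int r * int S \<le> int r * int a - int c * int b"
proof -
  have "trust_ok (real a) (real b) c r S F \<longleftrightarrow>
      real_of_int (int c * int F - int r * int S) \<le> real_of_int (int r * int a - int c * int b)"
    using assms by (simp add: trust_ok_iff)
  then show ?thesis by (simp only: of_int_le_iff)
qed

lemma trust_state_alive_iff:
  "snd (snd (trust_state \<alpha> \<beta> c r \<omega> t)) \<longleftrightarrow>
    (\<forall>n\<le>t. trust_ok \<alpha> \<beta> c r (S_hat \<alpha> \<beta> c r \<omega> n) (F_hat \<alpha> \<beta> c r \<omega> n))"
proof (induction t)
  case 0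
  then show ?case by (simp add: S_hat_def F_hat_def)
next
  case (Suc t)
  obtain S F al where "trust_state \<alpha> \<beta> c r \<omega> t = (S, F, al)"
    by (cases "trust_state \<alpha> \<beta> c r \<omega> t") auto
  then show ?case using Suc by (auto simp: S_hat_def F_hat_def Let_def le_Suc_eq)
qed

lemma trust_balance_eq_rw_Z:
  assumes "\<forall>n<t. trust_ok \<alpha> \<beta> c r (S_hat \<alpha> \<beta> c r \<omega> n) (F_hat \<alpha> \<beta> c r \<omega> n)"
  shows "int c * int (F_hat \<alpha> \<beta> c r \<omega> t) - int r * int (S_hat \<alpha> \<beta> c r \<omega> t) = rw_Z c r \<omega> t"
  using assms
proof (induction t)
  case 0
  then show ?case by (simp add: S_hat_def F_hat_def)
next
  case (Suc t)
  obtain S F al where st: "trust_state \<alpha> \<beta> c r \<omega> t = (S, F, al)"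
    by (cases "trust_state \<alpha> \<beta> c r \<omega> t") auto
  have al using trust_state_alive_iff[of \<alpha> \<beta> c r \<omega> t] Suc.prems st by auto
  moreover have "int c * int F - int r * int S = rw_Z c r \<omega> t"
    using Suc st by (simp add: S_hat_def F_hat_def)
  ultimately show ?case
    using st by (auto simp: S_hat_def F_hat_def Let_def rw_Z_Suc rw_step_def algebra_simps)
qed

lemma tau_finite_iff:
  assumes "0 < a"
  shows "tau (real a) (real b) c r \<omega> < \<infinity> \<longleftrightarrow> (\<exists>t. int r * int a - int c * int b < rw_Z c r \<omega> t)"
proof -
  let ?ok = "\<lambda>n. trust_ok (real a) (real b) c r
    (S_hat (real a) (real b) c r \<omega> n) (F_hat (real a) (real b) c r \<omega> n)"
  let ?k = "int r * int a - int c * int b"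
  let ?S = "S_hat (real a) (real b) c r \<omega>" and ?F = "F_hat (real a) (real b) c r \<omega>"
  have "tau (real a) (real b) c r \<omega> < \<infinity> \<longleftrightarrow> (\<exists>t. \<not> ?ok t)"
    by (simp add: tau_def)
  also have "\<dots> \<longleftrightarrow> (\<exists>t. ?k < rw_Z c r \<omega> t)"
  proof
    assume "\<exists>t. \<not> ?ok t"
    then obtain t where "\<not> ?ok t" "\<forall>n<t. ?ok n"
      using exists_least_iff[of "\<lambda>t. \<not> ?ok t"] by blast
    then have "?k < rw_Z c r \<omega> t"
      using trust_balance_eq_rw_Z[of t] trust_ok_iff_int[OF assms] by (simp add: not_le)
    then show "\<exists>t. ?k < rw_Z c r \<omega> t" ..
  next
    assume "\<exists>t. ?k < rw_Z c r \<omega> t"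
    then obtain t where t: "?k < rw_Z c r \<omega> t" ..
    show "\<exists>t. \<not> ?ok t"
    proof (rule ccontr)
      assume "\<not> (\<exists>t. \<not> ?ok t)"
      then have ok: "?ok n" for n by blast
      have "int c * int (?F t) - int r * int (?S t) \<le> ?k"
        using ok[of t] trust_ok_iff_int[OF assms] by simp
      moreover have "int c * int (?F t) - int r * int (?S t) = rw_Z c r \<omega> t"
        using ok by (simp add: trust_balance_eq_rw_Z)
      ultimately show False using t by simp
    qed
  qed
  finally show ?thesis .
qed

lemma p_quit_eq_rw_hit_prob:
  assumes "0 < a"
  shows "p_quit (real a) (real b) c r \<theta> = rw_hit_prob (int r * int a - int c * int b + 1) c r \<theta>"
proof -
  have "(k < z) \<longleftrightarrow> (k + 1 \<le> z)" for k z :: int by linarith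
  then show ?thesis
    unfolding p_quit_def rw_hit_prob_def tau_finite_iff[OF assms] by simp
qed

theorem lemma3p3:
  fixes r :: nat and \<theta> :: real
  assumes "0 < r" and "1 / (1 + real r) < \<theta>" and "\<theta> < 1"
  shows "(\<forall>u::nat. rw_hit_prob (int u) 1 r \<theta> = rw_hit_prob 1 1 r \<theta> ^ u)
       \<and> (let \<rho> = rw_hit_prob 1 1 r \<theta> in
            0 \<le> \<rho> \<and> \<rho> < 1 \<and> \<rho> = (1 - \<theta>) + \<theta> * \<rho> ^ (r + 1)
            \<and> (\<forall>x::real. 0 \<le> x \<and> x < 1 \<and> x = (1 - \<theta>) + \<theta> * x ^ (r + 1) \<longrightarrow> x = \<rho>))
       \<and> (\<forall>\<alpha> \<beta> :: nat. 0 < \<alpha> \<longrightarrow> 0 < \<beta> \<longrightarrow>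
            p_quit (real \<alpha>) (real \<beta>) 1 r \<theta>
              = rw_hit_prob (int r * int \<alpha> - int \<beta> + 1) 1 r \<theta>)"
proof -
  have "0 < 1 / (1 + real r)" by simp
  then have \<theta>: "0 < \<theta>" "0 \<le> \<theta>" "\<theta> \<le> 1" using assms(2,3) by linarith+
  define \<rho> where "\<rho> = rw_hit_prob 1 1 r \<theta>"
  have power: "rw_hit_prob (int u) 1 r \<theta> = \<rho> ^ u" for u
    unfolding \<rho>_def using rw_hit_prob_power[OF \<theta>(2,3)] .
  have fixed: "\<rho> = (1 - \<theta>) + \<theta> * \<rho> ^ (r + 1)"
    using rw_hit_prob_first_step[OF \<theta>(2,3), of 1 1 r] power[of "r + 1"]
    by (simp add: \<rho>_def rw_hit_prob_nonpos add.commute)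
  obtain q where q: "0 \<le> q" "q < 1" "q = (1 - \<theta>) + \<theta> * q ^ (r + 1)"
    using fixed_point_exists[OF assms(2,3)] by blast
  have "0 \<le> \<rho>" by (simp add: \<rho>_def rw_hit_prob_def)
  moreover have "\<rho> < 1"
    using rw_hit_prob_le_fixed_point[OF \<theta>(2,3) q(1,3), of 1] q(2) by (simp add: \<rho>_def)
  moreover have "\<forall>x. 0 \<le> x \<and> x < 1 \<and> x = (1 - \<theta>) + \<theta> * x ^ (r + 1) \<longrightarrow> x = \<rho>"
    using fixed_point_unique[OF assms(1) \<theta>(1)] calculation fixed by blast
  moreover have "p_quit (real a) (real b) 1 r \<theta> = rw_hit_prob (int r * int a - int b + 1) 1 r \<theta>"
    if "0 < a" for a b
    using p_quit_eq_rw_hit_prob[OF that, of b 1 r \<theta>] by simp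
  ultimately show ?thesis
    using power fixed unfolding \<rho>_def[symmetric] Let_def by blast
qed

end
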